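(* Let $a>0$ and $0\le r_0<a$, and consider, in polar coordinates $(r,\theta)$ about a pole $O$, the circle of radius $a$ whose centre $C$ has polar coordinates $(r_0,\theta_0)$. Thus $O$ lies strictly inside the circle, and for each direction $\theta$ the ray from $O$ in direction $\theta$ meets the circle at distance $$r(\theta)=r_0\cos(\theta-\theta_0)+\sqrt{a^2-r_0^2\sin^2(\theta-\theta_0)}$$ from $O$. Let $\theta_1<\theta_2<\theta_3<\theta_4<\theta_1+\pi$ and set $\theta_{i+4}=\theta_i+\pi$ for $i=1,2,3,4$ and $\theta_9=\theta_1+2\pi$. The four lines through $O$ in the directions $\theta_1,\theta_2,\theta_3,\theta_4$ divide the disc into eight sectors; for $1\le i\le 8$ let $$S_i=\frac12\int_{\theta_i}^{\theta_{i+1}} r(\theta)^2\,d\theta$$ be the area of the sector $\{O+\rho(\cos\theta,\sin\theta):\ \theta_i\le\theta\le\theta_{i+1},\ 0\le\rho\le r(\theta)\}$. Then $$S_1+S_3+S_5+S_7=S_2+S_4+S_6+S_8$$ if and only if $$\frac{r_0^2}{2}\Big[\sin 2(\theta_2-\theta_0)-\sin 2(\theta_1-\theta_0)+\sin 2(\theta_4-\theta_0)-\sin 2(\theta_3-\theta_0)\Big]+a^2\Big(\theta_2-\theta_1+\theta_4-\theta_3-\frac{\pi}{2}\Big)=0 .$$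
   Context: Polar coordinates are taken about the pole $O$; the point with polar coordinates $(r,\theta)$ is $O+r(\cos\theta,\sin\theta)$. The alternative sector sums are the sums of the areas of the odd-indexed sectors and of the even-indexed sectors, respectively. *)

theory Defs
  imports "HOL-Analysis.Analysis"
begin

definition circ_r :: "real \<Rightarrow> real \<Rightarrow> real \<Rightarrow> real \<Rightarrow> real" where
  "circ_r a r0 th0 th = r0 * cos (th - th0) + sqrt (a^2 - r0^2 * (sin (th - th0))^2)"

definition sector_area :: "real \<Rightarrow> real \<Rightarrow> real \<Rightarrow> real \<Rightarrow> real \<Rightarrow> real" where
  "sector_area a r0 th0 alpha beta = (1/2) * integral {alpha..beta} (\<lambda>th. (circ_r a r0 th0 th)^2)"

definition ext_angle :: "real \<Rightarrow> real \<Rightarrow> real \<Rightarrow> real \<Rightarrow> nat \<Rightarrow> real" where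
  "ext_angle t1 t2 t3 t4 i =
     (if i = 1 then t1 else if i = 2 then t2 else if i = 3 then t3 else if i = 4 then t4
      else if i = 5 then t1 + pi else if i = 6 then t2 + pi else if i = 7 then t3 + pi
      else if i = 8 then t4 + pi else t1 + 2 * pi)"

end

theory Submission
  imports Defs
begin

text \<open>Opposite sectors pair up: along the chord through O in direction \<theta>,
  r(\<theta>)^2 + r(\<theta> + \<pi>)^2 = 2 (a^2 + r0^2 cos 2(\<theta> - \<theta>0)), so S(i) + S(i+4) integrates
  in closed form.
  Both sides of the claimed equation are then linear in these four pair sums, and their
  difference is twice the stated expression.\<close>

lemma circ_r_sq_add_antipodal:
  assumes "r0^2 \<le> a^2"
  shows "(circ_r a r0 th0 x)^2 + (circ_r a r0 th0 (x + pi))^2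
           = 2 * (a^2 + r0^2 * cos (2 * (x - th0)))"
proof -
  define c s where "c = cos (x - th0)" and "s = sin (x - th0)"
  define Q where "Q = sqrt (a^2 - r0^2 * s^2)"
  have "r0^2 * s^2 \<le> r0^2"
    using mult_left_mono[of "s^2" 1 "r0^2"] by (simp add: s_def square_le_1)
  with assms have Q_sq: "Q^2 = a^2 - r0^2 * s^2"
    by (simp add: Q_def)
  have "sin (x + pi - th0) = - s" "cos (x + pi - th0) = - c"
    using sin_periodic_pi[of "x - th0"] cos_periodic_pi[of "x - th0"]
    by (simp_all add: c_def s_def algebra_simps)
  then have r_x: "circ_r a r0 th0 x = r0 * c + Q"
    and r_x_pi: "circ_r a r0 th0 (x + pi) = Q - r0 * c"
    by (simp_all add: circ_r_def c_def s_def Q_def)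
  have "(circ_r a r0 th0 x)^2 + (circ_r a r0 th0 (x + pi))^2 = 2 * Q^2 + 2 * r0^2 * c^2"
    unfolding r_x r_x_pi by (simp add: power2_eq_square algebra_simps)
  also have "\<dots> = 2 * (a^2 + r0^2 * (c^2 - s^2))"
    using Q_sq by (simp add: algebra_simps)
  also have "c^2 - s^2 = cos (2 * (x - th0))"
    unfolding c_def s_def by (rule cos_double[symmetric])
  finally show ?thesis .
qed

lemma sector_area_add_antipodal:
  assumes "r0^2 \<le> a^2" and "al \<le> be"
  shows "sector_area a r0 th0 al be + sector_area a r0 th0 (al + pi) (be + pi)
           = a^2 * (be - al) + r0^2 / 2 * (sin (2 * (be - th0)) - sin (2 * (al - th0)))"
proof -
  define f where "f = (\<lambda>x. (circ_r a r0 th0 x)^2)"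
  have f_cont: "continuous_on UNIV f" "continuous_on UNIV (\<lambda>x. f (x + pi))"
    unfolding f_def circ_r_def by (intro continuous_intros)+
  have "integral {al + pi..be + pi} f = integral {al..be} (\<lambda>x. f (x + pi))"
    using integral_shift_Icc_real[of al be f pi] by (simp add: o_def add.commute)
  then have "integral {al..be} f + integral {al + pi..be + pi} f
               = integral {al..be} (\<lambda>x. f x + f (x + pi))"
    using integral_add[of f "{al..be}" "\<lambda>x. f (x + pi)"] f_cont
    by (simp add: integrable_continuous_interval continuous_on_subset)
  also have "\<dots> = integral {al..be} (\<lambda>x. 2 * (a^2 + r0^2 * cos (2 * (x - th0))))"
    using circ_r_sq_add_antipodal[OF assms(1)] by (simp add: f_def)
  also have "\<dots> = 2 * (a^2 * be + r0^2 / 2 * sin (2 * (be - th0)))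
                    - 2 * (a^2 * al + r0^2 / 2 * sin (2 * (al - th0)))"
  proof (rule integral_unique, rule fundamental_theorem_of_calculus[OF assms(2)])
    fix x
    show "((\<lambda>x. 2 * (a^2 * x + r0^2 / 2 * sin (2 * (x - th0)))) has_vector_derivative
            2 * (a^2 + r0^2 * cos (2 * (x - th0)))) (at x within {al..be})"
      unfolding has_real_derivative_iff_has_vector_derivative[symmetric]
      by (auto intro!: derivative_eq_intros)
  qed
  finally show ?thesis
    by (simp add: sector_area_def f_def algebra_simps)
qed

theorem mainTheorem1:
  fixes a r0 th0 t1 t2 t3 t4 :: real
  assumes "a > 0" and "0 \<le> r0" and "r0 < a"
    and "t1 < t2" and "t2 < t3" and "t3 < t4" and "t4 < t1 + pi"
  defines "S \<equiv> \<lambda>i::nat. sector_area a r0 th0 (ext_angle t1 t2 t3 t4 i) (ext_angle t1 t2 t3 t4 (i + 1))"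
  shows "S 1 + S 3 + S 5 + S 7 = S 2 + S 4 + S 6 + S 8 \<longleftrightarrow>
    r0^2 / 2 * (sin (2 * (t2 - th0)) - sin (2 * (t1 - th0)) + sin (2 * (t4 - th0)) - sin (2 * (t3 - th0)))
      + a^2 * (t2 - t1 + t4 - t3 - pi / 2) = 0"
proof -
  have r0_a: "r0^2 \<le> a^2"
    using assms(2,3) by (simp add: power_mono)
  note pair = sector_area_add_antipodal[OF r0_a]
  have sin_t1_pi: "sin (2 * t1 + 2 * pi - 2 * th0) = sin (2 * t1 - 2 * th0)"
    using sin_periodic[of "2 * t1 - 2 * th0"] by (simp add: algebra_simps)
  have "S 1 + S 5 = a^2 * (t2 - t1) + r0^2 / 2 * (sin (2 * (t2 - th0)) - sin (2 * (t1 - th0)))"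
    "S 2 + S 6 = a^2 * (t3 - t2) + r0^2 / 2 * (sin (2 * (t3 - th0)) - sin (2 * (t2 - th0)))"
    "S 3 + S 7 = a^2 * (t4 - t3) + r0^2 / 2 * (sin (2 * (t4 - th0)) - sin (2 * (t3 - th0)))"
    "S 4 + S 8 = a^2 * (t1 + pi - t4) + r0^2 / 2 * (sin (2 * (t1 - th0)) - sin (2 * (t4 - th0)))"
    using pair[of t1 t2] pair[of t2 t3] pair[of t3 t4] pair[of t4 "t1 + pi"] assms(4-7)
    by (simp_all add: S_def ext_angle_def sin_t1_pi add.assoc)
  then have "(S 1 + S 3 + S 5 + S 7) - (S 2 + S 4 + S 6 + S 8) = 2 *
    (r0^2 / 2 * (sin (2 * (t2 - th0)) - sin (2 * (t1 - th0)) + sin (2 * (t4 - th0)) - sin (2 * (t3 - th0)))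
      + a^2 * (t2 - t1 + t4 - t3 - pi / 2))"
    by (simp add: algebra_simps)
  then show ?thesis
    by (metis eq_iff_diff_eq_0 mult_eq_0_iff zero_neq_numeral)
qed

end
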